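(* Let $\varPhi\subset\mathbb{E}^3$ be a skew ruled surface with invariants $\delta,\kappa,\lambda$, right normalized with support function $q=\frac{f(u)+g(u)v}{w}$, neither $f$ nor $g$ the zero function. Then the Tchebychev vector field $\overline{T}$ is tangential to the curved asymptotic lines of $\varPhi$ if and only if $\varPhi$ is conoidal, $g$ is a nonvanishing constant $c_1$, and $f=|\delta|^{1/2}\left(\frac{c_1}{2}\int|\delta|^{1/2}\lambda\,\mathrm{d}u+c_2\right)$, $c_2\in\mathbb{R}$.
   Context: $\varPhi$ is a ruled $C^r$-surface ($r\ge3$) with nonvanishing Gaussian curvature, in standard parameters $\overline{x}(u,v)=\overline{s}(u)+v\,\overline{e}(u)$, $|\overline{e}|=|\overline{e}'|=1$, $\langle\overline{s}',\overline{e}'\rangle=0$. Frame $\overline{n}=\overline{e}'$, $\overline{z}=\overline{e}\times\overline{n}$. Invariants: $\delta=(\overline{s}',\overline{e},\overline{e}')\neq0$, $\kappa=(\overline{e},\overline{e}',\overline{e}'')$, $\lambda=\cot\sphericalangle(\overline{e},\overline{s}')$, $\overline{s}'=\delta\lambda\overline{e}+\delta\overline{z}$. Conoidal means $\kappa\equiv0$. $w=\sqrt{\delta^2+v^2}$, $\overline{\xi}=(\delta\overline{n}-v\overline{z})/w$. $h_{11}=-(\kappa w^2+\delta'v-\delta^2\lambda)/w$, $h_{12}=\delta/w$, $h_{22}=0$. The curved asymptotic lines are the curves $v=v(u)$ satisfying $\kappa v^2+\delta'v+\delta^2(\kappa-\lambda)-2\delta v'=0$. A relative normalization is determined by its support function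 $q=\langle\overline{\xi},\overline{y}\rangle\neq0$; right normalization: $q=(f+gv)/w$, $f,g$ functions of $u$. Relative metric $G_{ij}=q^{-1}h_{ij}$, Darboux tensor $A_{ijk}=q^{-1}\langle\overline{\xi},\nabla^G_k\nabla^G_j\overline{x}_{/i}\rangle$, Tchebychev vector $\overline{T}=T^m\overline{x}_{/m}$, $T^m=\frac12A_i^{\ im}$; equivalently $T^1=\frac{w^2q_{/2}+vq}{\delta w}$, $T^2=\frac{2\delta w^2q_{/1}+\delta'q(\delta^2-v^2)}{2\delta^2w}+\frac{T^1(\kappa w^2+\delta'v-\delta^2\lambda)}{\delta}$. "Tangential to a family of curves" means at every point $\overline{T}$ is parallel to the tangent of the curve of the family through that point. $\int\cdots\mathrm{d}u$ denotes an antiderivative. *)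

theory Defs
  imports "HOL-Analysis.Analysis"
begin

text \<open>A ruled surface x(u,v) = s(u) + v e(u), u in an open interval I.
  The functions s1,s2,s3 (resp. e1,e2,e3) are the first three derivatives of s (resp. e).\<close>

definition standard_ruled ::
  "(real \<Rightarrow> real^3) \<Rightarrow> (real \<Rightarrow> real^3) \<Rightarrow> (real \<Rightarrow> real^3) \<Rightarrow> (real \<Rightarrow> real^3) \<Rightarrow>
   (real \<Rightarrow> real^3) \<Rightarrow> (real \<Rightarrow> real^3) \<Rightarrow> (real \<Rightarrow> real^3) \<Rightarrow> (real \<Rightarrow> real^3) \<Rightarrow>
   real set \<Rightarrow> bool" where
  "standard_ruled s s1 s2 s3 e e1 e2 e3 I \<longleftrightarrow>
     open I \<and> is_interval I \<and> I \<noteq> {} \<and>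
     (\<forall>u\<in>I. (s has_vector_derivative s1 u) (at u) \<and> (s1 has_vector_derivative s2 u) (at u) \<and>
             (s2 has_vector_derivative s3 u) (at u) \<and>
             (e has_vector_derivative e1 u) (at u) \<and> (e1 has_vector_derivative e2 u) (at u) \<and>
             (e2 has_vector_derivative e3 u) (at u)) \<and>
     continuous_on I s3 \<and> continuous_on I e3 \<and>
     (\<forall>u\<in>I. norm (e u) = 1 \<and> norm (e1 u) = 1 \<and> s1 u \<bullet> e1 u = 0)"

definition rs_delta :: "(real \<Rightarrow> real^3) \<Rightarrow> (real \<Rightarrow> real^3) \<Rightarrow> (real \<Rightarrow> real^3) \<Rightarrow> real \<Rightarrow> real" where
  "rs_delta s1 e e1 u = s1 u \<bullet> cross3 (e u) (e1 u)"

definition rs_kappa :: "(real \<Rightarrow> real^3) \<Rightarrow> (real \<Rightarrow> real^3) \<Rightarrow> (real \<Rightarrow> real^3) \<Rightarrow> real \<Rightarrow> real" where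
  "rs_kappa e e1 e2 u = e u \<bullet> cross3 (e1 u) (e2 u)"

definition vec_angle :: "real^3 \<Rightarrow> real^3 \<Rightarrow> real" where
  "vec_angle a b = arccos ((a \<bullet> b) / (norm a * norm b))"

definition rs_lambda :: "(real \<Rightarrow> real^3) \<Rightarrow> (real \<Rightarrow> real^3) \<Rightarrow> real \<Rightarrow> real" where
  "rs_lambda s1 e u = cot (vec_angle (e u) (s1 u))"

definition rs_w :: "(real \<Rightarrow> real^3) \<Rightarrow> (real \<Rightarrow> real^3) \<Rightarrow> (real \<Rightarrow> real^3) \<Rightarrow> real \<Rightarrow> real \<Rightarrow> real" where
  "rs_w s1 e e1 u v = sqrt ((rs_delta s1 e e1 u)\<^sup>2 + v\<^sup>2)"

definition rs_xi :: "(real \<Rightarrow> real^3) \<Rightarrow> (real \<Rightarrow> real^3) \<Rightarrow> (real \<Rightarrow> real^3) \<Rightarrow> real \<Rightarrow> real \<Rightarrow> real^3" where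
  "rs_xi s1 e e1 u v = (1 / rs_w s1 e e1 u v) *\<^sub>R
      (rs_delta s1 e e1 u *\<^sub>R e1 u - v *\<^sub>R cross3 (e u) (e1 u))"

definition rs_h11 :: "(real \<Rightarrow> real^3) \<Rightarrow> (real \<Rightarrow> real^3) \<Rightarrow> (real \<Rightarrow> real^3) \<Rightarrow> (real \<Rightarrow> real^3) \<Rightarrow>
    (real \<Rightarrow> real^3) \<Rightarrow> real \<Rightarrow> real \<Rightarrow> real" where
  "rs_h11 s1 s2 e e1 e2 u v = rs_xi s1 e e1 u v \<bullet> (s2 u + v *\<^sub>R e2 u)"

definition rs_h12 :: "(real \<Rightarrow> real^3) \<Rightarrow> (real \<Rightarrow> real^3) \<Rightarrow> (real \<Rightarrow> real^3) \<Rightarrow> real \<Rightarrow> real \<Rightarrow> real" where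
  "rs_h12 s1 e e1 u v = rs_xi s1 e e1 u v \<bullet> e1 u"

definition rs_q :: "(real \<Rightarrow> real^3) \<Rightarrow> (real \<Rightarrow> real^3) \<Rightarrow> (real \<Rightarrow> real^3) \<Rightarrow>
    (real \<Rightarrow> real) \<Rightarrow> (real \<Rightarrow> real) \<Rightarrow> real \<Rightarrow> real \<Rightarrow> real" where
  "rs_q s1 e e1 f g u v = (f u + g u * v) / rs_w s1 e e1 u v"

text \<open>Components of the Tchebychev vector (formula from the context; the bracket
  kappa w^2 + delta' v - delta^2 lambda is written as its source, - w h_11).\<close>
definition rs_T1 :: "(real \<Rightarrow> real^3) \<Rightarrow> (real \<Rightarrow> real^3) \<Rightarrow> (real \<Rightarrow> real^3) \<Rightarrow>
    (real \<Rightarrow> real) \<Rightarrow> (real \<Rightarrow> real) \<Rightarrow> real \<Rightarrow> real \<Rightarrow> real" where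
  "rs_T1 s1 e e1 f g u v =
     ((rs_w s1 e e1 u v)\<^sup>2 * deriv (\<lambda>v'. rs_q s1 e e1 f g u v') v + v * rs_q s1 e e1 f g u v)
     / (rs_delta s1 e e1 u * rs_w s1 e e1 u v)"

definition rs_T2 :: "(real \<Rightarrow> real^3) \<Rightarrow> (real \<Rightarrow> real^3) \<Rightarrow> (real \<Rightarrow> real^3) \<Rightarrow> (real \<Rightarrow> real^3) \<Rightarrow>
    (real \<Rightarrow> real^3) \<Rightarrow> (real \<Rightarrow> real) \<Rightarrow> (real \<Rightarrow> real) \<Rightarrow> real \<Rightarrow> real \<Rightarrow> real" where
  "rs_T2 s1 s2 e e1 e2 f g u v =
     (let d = rs_delta s1 e e1 u; w = rs_w s1 e e1 u v; q = rs_q s1 e e1 f g u v in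
      (2 * d * w\<^sup>2 * deriv (\<lambda>u'. rs_q s1 e e1 f g u' v) u
         + deriv (rs_delta s1 e e1) u * q * (d\<^sup>2 - v\<^sup>2)) / (2 * d\<^sup>2 * w)
      + rs_T1 s1 e e1 f g u v * (- w * rs_h11 s1 s2 e e1 e2 u v) / d)"

definition rs_Tvec where
  "rs_Tvec s1 s2 e e1 e2 f g u v =
     rs_T1 s1 e e1 f g u v *\<^sub>R (s1 u + v *\<^sub>R e1 u) + rs_T2 s1 s2 e e1 e2 f g u v *\<^sub>R e u"

text \<open>Tangent vector x_u + v'(u) x_v of the curved asymptotic line v = v(u) through (u,v):
  the asymptotic line condition h_11 + 2 h_12 v' = 0 determines v'.\<close>
definition rs_asym_tangent where
  "rs_asym_tangent s1 s2 e e1 e2 u v =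
     (s1 u + v *\<^sub>R e1 u) +
     (- rs_h11 s1 s2 e e1 e2 u v / (2 * rs_h12 s1 e e1 u v)) *\<^sub>R e u"

definition tcheb_tangential_curved_asym where
  "tcheb_tangential_curved_asym s1 s2 e e1 e2 f g I J \<longleftrightarrow>
     (\<forall>u\<in>I. \<forall>v\<in>J. cross3 (rs_Tvec s1 s2 e e1 e2 f g u v) (rs_asym_tangent s1 s2 e e1 e2 u v) = 0)"

end

theory Submission
  imports Defs
begin

(* At a point (u, v) the Tchebychev vector T^1 x_u + T^2 x_v and the tangent x_u + m x_v of the
   curved asymptotic line, m = -h_11 / (2 h_12), are parallel iff T^1 m - T^2 = 0.  For the right
   normalization T^1 = g / delta, and T^1 m - T^2 is -1/(2 delta^2) times the polynomial
     g kappa v^2 + 2 delta g' v + (2 delta f' - delta' f + g kappa delta^2 - g delta |delta| lambda)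
   in v (here lambda is the cotangent of the angle, so <s', e> = |delta| lambda).
   Vanishing for all v in the open set J forces the three coefficients to vanish: g' = 0 makes g
   a constant c1, nonzero as g is not the zero function, hence kappa = 0, and the remaining linear
   equation 2 delta f' - delta' f = c1 delta |delta| lambda becomes h' = c1/2 |delta|^(1/2) lambda
   under the substitution f = |delta|^(1/2) h. *)

lemma orthonormal_frame_decomp:
  fixes e n x :: "real^3"
  assumes "e \<bullet> e = 1" "n \<bullet> n = 1" "e \<bullet> n = 0"
  shows "x = (x \<bullet> e) *\<^sub>R e + (x \<bullet> n) *\<^sub>R n + (x \<bullet> cross3 e n) *\<^sub>R cross3 e n"
proof -
  define z where "z = cross3 e n"
  have ze: "z \<bullet> e = 0" and zn: "z \<bullet> n = 0" unfolding z_def by (simp_all add: dot_cross_self)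
  have zz: "z \<bullet> z = 1" unfolding z_def using assms by (simp add: dot_cross inner_commute)
  define r where "r = x - (x \<bullet> e) *\<^sub>R e - (x \<bullet> n) *\<^sub>R n - (x \<bullet> z) *\<^sub>R z"
  have "r \<bullet> e = 0" "r \<bullet> n = 0" "r \<bullet> z = 0"
    unfolding r_def using assms ze zn zz
    by (simp_all add: inner_diff_left inner_diff_right inner_commute)
  then have "cross3 r z = 0" and "(norm r * norm z)\<^sup>2 = 0"
    using norm_cross_dot[of r z] unfolding z_def by (simp_all add: Lagrange)
  moreover have "norm z = 1" using zz by (simp add: norm_eq_1)
  ultimately have "r = 0" by simp
  then show ?thesis unfolding r_def z_def by (simp add: algebra_simps)
qed

lemma orthonormal_frame_inner:
  fixes e n x y :: "real^3"
  assumes "e \<bullet> e = 1" "n \<bullet> n = 1" "e \<bullet> n = 0"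
  shows "x \<bullet> y = (x \<bullet> e) * (y \<bullet> e) + (x \<bullet> n) * (y \<bullet> n) + (x \<bullet> cross3 e n) * (y \<bullet> cross3 e n)"
  by (subst orthonormal_frame_decomp[OF assms, of x])
     (simp add: inner_add_left inner_add_right inner_commute)

lemma cot_vec_angle_orthonormal_frame:
  fixes e n x :: "real^3"
  assumes ee: "e \<bullet> e = 1" and nn: "n \<bullet> n = 1" and en: "e \<bullet> n = 0" and xn: "x \<bullet> n = 0"
    and xz: "x \<bullet> cross3 e n \<noteq> 0"
  shows "cot (vec_angle e x) = (x \<bullet> e) / \<bar>x \<bullet> cross3 e n\<bar>"
proof -
  define a where "a = x \<bullet> e"
  define d where "d = x \<bullet> cross3 e n"
  define N where "N = norm x"
  define c where "c = a / N"
  have N2: "N\<^sup>2 = a\<^sup>2 + d\<^sup>2"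
    using orthonormal_frame_inner[OF ee nn en, of x x] xn
    unfolding N_def a_def d_def by (simp add: power2_norm_eq_inner[symmetric] power2_eq_square)
  have d2: "d\<^sup>2 > 0" using xz unfolding d_def by simp
  have "x \<noteq> 0" using xz by auto
  then have N: "N > 0" unfolding N_def by simp
  have "norm e = 1" using ee by (simp add: norm_eq_1)
  then have "vec_angle e x = arccos c"
    unfolding vec_angle_def c_def a_def N_def by (simp add: inner_commute)
  moreover have "1 - c\<^sup>2 = d\<^sup>2 / N\<^sup>2"
    unfolding c_def power_divide using N d2 by (simp add: divide_simps N2)
  moreover have "c\<^sup>2 < 1" using calculation(2) N d2 by (smt (verit) divide_pos_pos zero_less_power)
  ultimately have "cot (vec_angle e x) = c / (\<bar>d\<bar> / N)"
    using N by (simp add: cot_def cos_arccos sin_arccos abs_square_less_1 real_sqrt_divide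
        real_sqrt_abs less_imp_le abs_le_iff)
  then show ?thesis using N unfolding c_def a_def d_def by simp
qed

lemma cross3_tangent_combination:
  fixes X E :: "real^3"
  shows "cross3 (a *\<^sub>R X + b *\<^sub>R E) (X + m *\<^sub>R E) = (a * m - b) *\<^sub>R cross3 X E"
  by (simp add: cross_add_left cross_add_right cross_mult_left cross_mult_right
      cross_skew[of E X] algebra_simps)

lemma inner_constant_imp_derivative_eq_0:
  fixes p q :: "real \<Rightarrow> real^3"
  assumes "(p has_vector_derivative p') (at u)" "(q has_vector_derivative q') (at u)"
    "open I" "u \<in> I" "\<And>x. x \<in> I \<Longrightarrow> p x \<bullet> q x = c"
  shows "p u \<bullet> q' + p' \<bullet> q u = 0"
proof -
  have "((\<lambda>x. p x \<bullet> q x) has_real_derivative (p u \<bullet> q' + p' \<bullet> q u)) (at u)"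
    using bounded_bilinear.has_vector_derivative[OF bounded_bilinear_inner assms(1,2)]
    by (simp add: has_real_derivative_iff_has_vector_derivative)
  moreover have "((\<lambda>x. p x \<bullet> q x) has_real_derivative 0) (at u)"
    by (rule has_field_derivative_transform_within_open[OF DERIV_const assms(3,4)])
       (simp add: assms(5))
  ultimately show ?thesis by (rule DERIV_unique)
qed

lemma standard_ruled_frame:
  assumes ruled: "standard_ruled s s1 s2 s3 e e1 e2 e3 I" and u: "u \<in> I"
  shows "e u \<bullet> e u = 1" "e1 u \<bullet> e1 u = 1" "e u \<bullet> e1 u = 0" "s1 u \<bullet> e1 u = 0"
    and "e u \<bullet> e2 u = -1" "e1 u \<bullet> e2 u = 0" "s2 u \<bullet> e1 u + s1 u \<bullet> e2 u = 0"
proof -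
  have I: "open I" using ruled unfolding standard_ruled_def by blast
  have D: "\<And>x. x \<in> I \<Longrightarrow> (s1 has_vector_derivative s2 x) (at x) \<and>
      (e has_vector_derivative e1 x) (at x) \<and> (e1 has_vector_derivative e2 x) (at x)"
    using ruled unfolding standard_ruled_def by blast
  have N: "\<And>x. x \<in> I \<Longrightarrow> e x \<bullet> e x = 1 \<and> e1 x \<bullet> e1 x = 1 \<and> s1 x \<bullet> e1 x = 0"
    using ruled unfolding standard_ruled_def by (auto simp: norm_eq_1)
  then show "e u \<bullet> e u = 1" "e1 u \<bullet> e1 u = 1" "s1 u \<bullet> e1 u = 0" using u by auto
  have ee1: "e x \<bullet> e1 x = 0" if x: "x \<in> I" for x
    using inner_constant_imp_derivative_eq_0[of e "e1 x" x e "e1 x" I 1] D[OF x] I x N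
    by (simp add: inner_commute)
  then show "e u \<bullet> e1 u = 0" using u .
  show "e u \<bullet> e2 u = -1"
    using inner_constant_imp_derivative_eq_0[of e "e1 u" u e1 "e2 u" I 0] D[OF u] I u ee1 N
    by (simp add: inner_commute)
  show "e1 u \<bullet> e2 u = 0"
    using inner_constant_imp_derivative_eq_0[of e1 "e2 u" u e1 "e2 u" I 1] D[OF u] I u N
    by (simp add: inner_commute)
  show "s2 u \<bullet> e1 u + s1 u \<bullet> e2 u = 0"
    using inner_constant_imp_derivative_eq_0[of s1 "s2 u" u e1 "e2 u" I 0] D[OF u] I u N
    by (simp add: inner_commute)
qed

lemma standard_ruled_s1_cross_e_e2:
  assumes "standard_ruled s s1 s2 s3 e e1 e2 e3 I" "u \<in> I"
  shows "s1 u \<bullet> cross3 (e u) (e2 u) = 0"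
proof -
  note fr = standard_ruled_frame[OF assms]
  have "cross3 (e u) (e2 u) \<bullet> cross3 (e u) (e1 u) = 0"
    using fr by (simp add: dot_cross inner_commute)
  then show ?thesis
    using orthonormal_frame_inner[OF fr(1-3), of "s1 u" "cross3 (e u) (e2 u)"] fr(4)
    by (simp add: dot_cross_self)
qed

lemma rs_delta_has_derivative:
  assumes ruled: "standard_ruled s s1 s2 s3 e e1 e2 e3 I" and u: "u \<in> I"
  shows "(rs_delta s1 e e1 has_real_derivative s2 u \<bullet> cross3 (e u) (e1 u)) (at u)"
proof -
  have D: "(s1 has_vector_derivative s2 u) (at u)" "(e has_vector_derivative e1 u) (at u)"
      "(e1 has_vector_derivative e2 u) (at u)"
    using ruled u unfolding standard_ruled_def by blast+
  have "bounded_bilinear cross3" using bilinear_cross bilinear_conv_bounded_bilinear by blast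
  from bounded_bilinear.has_vector_derivative[OF this D(2,3)]
  have "((\<lambda>x. cross3 (e x) (e1 x)) has_vector_derivative cross3 (e u) (e2 u)) (at u)"
    by simp
  from bounded_bilinear.has_vector_derivative[OF bounded_bilinear_inner D(1) this]
  show ?thesis
    using standard_ruled_s1_cross_e_e2[OF ruled u]
    by (simp add: rs_delta_def[abs_def] has_real_derivative_iff_has_vector_derivative)
qed

lemma rs_lambda_eq:
  assumes "standard_ruled s s1 s2 s3 e e1 e2 e3 I" "u \<in> I" "rs_delta s1 e e1 u \<noteq> 0"
  shows "rs_lambda s1 e u = (s1 u \<bullet> e u) / \<bar>rs_delta s1 e e1 u\<bar>"
  using cot_vec_angle_orthonormal_frame[OF standard_ruled_frame(1-4)[OF assms(1,2)]] assms(3)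
  by (simp add: rs_lambda_def rs_delta_def)

lemma rs_w_pos_and_square:
  assumes "rs_delta s1 e e1 u \<noteq> 0"
  shows "rs_w s1 e e1 u v > 0" "(rs_w s1 e e1 u v)\<^sup>2 = (rs_delta s1 e e1 u)\<^sup>2 + v\<^sup>2"
  using assms by (simp_all add: rs_w_def add_pos_nonneg)

lemma rs_h12_eq:
  assumes "standard_ruled s s1 s2 s3 e e1 e2 e3 I" "u \<in> I"
  shows "rs_h12 s1 e e1 u v = rs_delta s1 e e1 u / rs_w s1 e e1 u v"
  using standard_ruled_frame(2)[OF assms]
  by (simp add: rs_h12_def rs_xi_def inner_diff_left dot_cross_self)

lemma rs_h11_eq:
  assumes ruled: "standard_ruled s s1 s2 s3 e e1 e2 e3 I" and u: "u \<in> I"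
    and d: "rs_delta s1 e e1 u \<noteq> 0"
  shows "rs_h11 s1 s2 e e1 e2 u v =
    - (rs_kappa e e1 e2 u * (rs_w s1 e e1 u v)\<^sup>2 + deriv (rs_delta s1 e e1) u * v
       - rs_delta s1 e e1 u * (s1 u \<bullet> e u)) / rs_w s1 e e1 u v"
proof -
  note fr = standard_ruled_frame[OF ruled u]
  define z where "z = cross3 (e u) (e1 u)"
  define w where "w = rs_w s1 e e1 u v"
  have k: "rs_kappa e e1 e2 u = z \<bullet> e2 u"
    unfolding rs_kappa_def z_def using cross_triple[of "e u" "e1 u" "e2 u"] by (simp add: inner_commute)
  have d': "deriv (rs_delta s1 e e1) u = s2 u \<bullet> z"
    unfolding z_def by (rule DERIV_imp_deriv[OF rs_delta_has_derivative[OF ruled u]])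
  have "s1 u \<bullet> e2 u = - (s1 u \<bullet> e u) + rs_delta s1 e e1 u * (z \<bullet> e2 u)"
    using orthonormal_frame_inner[OF fr(1-3), of "s1 u" "e2 u"] fr
    unfolding z_def rs_delta_def by (simp add: inner_commute)
  then have s2n: "s2 u \<bullet> e1 u = s1 u \<bullet> e u - rs_delta s1 e e1 u * (z \<bullet> e2 u)"
    using fr(7) by simp
  have "rs_h11 s1 s2 e e1 e2 u v =
      (rs_delta s1 e e1 u * (s2 u \<bullet> e1 u) + rs_delta s1 e e1 u * v * (e1 u \<bullet> e2 u)
       - v * (s2 u \<bullet> z) - v * v * (z \<bullet> e2 u)) / w"
    unfolding rs_h11_def rs_xi_def w_def z_def
    by (simp add: inner_diff_left inner_add_right algebra_simps divide_simps inner_commute)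
  also have "\<dots> = - (rs_kappa e e1 e2 u * w\<^sup>2 + deriv (rs_delta s1 e e1) u * v
       - rs_delta s1 e e1 u * (s1 u \<bullet> e u)) / w"
    unfolding s2n k d' fr(6) w_def rs_w_pos_and_square(2)[OF d] by (simp add: algebra_simps power2_eq_square)
  finally show ?thesis unfolding w_def .
qed

lemma tchebychev_asymptotic_identity:
  fixes d w v f g Df Dg Dd k a :: real
  assumes d: "d \<noteq> 0" and w: "w > 0" "w\<^sup>2 = d\<^sup>2 + v\<^sup>2"
  defines "q \<equiv> (f + g * v) / w"
    and "q_v \<equiv> (g * d\<^sup>2 - f * v) / w ^ 3"
    and "q_u \<equiv> (Df + Dg * v) / w - (f + g * v) * d * Dd / w ^ 3"
    and "h11 \<equiv> - (k * w\<^sup>2 + Dd * v - d * a) / w"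
  defines "T1 \<equiv> (w\<^sup>2 * q_v + v * q) / (d * w)"
  shows "T1 * (- h11 / (2 * (d / w)))
          - ((2 * d * w\<^sup>2 * q_u + Dd * q * (d\<^sup>2 - v\<^sup>2)) / (2 * d\<^sup>2 * w) + T1 * (- w * h11) / d)
        = - (g * k * v\<^sup>2 + 2 * d * Dg * v + (2 * d * Df - Dd * f + g * k * d\<^sup>2 - g * d * a))
          / (2 * d\<^sup>2)"
proof -
  have "w\<^sup>2 * q_v + v * q = g * w"
    unfolding q_v_def q_def using w(1) by (simp add: field_simps) (insert w(2), algebra)
  then have T1: "T1 = g / d" unfolding T1_def using w(1) by simp
  have "2 * d * w\<^sup>2 * q_u + Dd * q * (d\<^sup>2 - v\<^sup>2) = w * (2 * d * (Df + Dg * v) - Dd * (f + g * v))"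
    unfolding q_u_def q_def using w(1) by (simp add: field_simps) (insert w(2), algebra)
  then have A: "(2 * d * w\<^sup>2 * q_u + Dd * q * (d\<^sup>2 - v\<^sup>2)) / (2 * d\<^sup>2 * w)
      = (2 * d * (Df + Dg * v) - Dd * (f + g * v)) / (2 * d\<^sup>2)"
    using w(1) by simp
  have B: "- w * h11 = k * w\<^sup>2 + Dd * v - d * a"
    "- h11 / (2 * (d / w)) = (k * w\<^sup>2 + Dd * v - d * a) / (2 * d)"
    unfolding h11_def using w(1) d by (simp_all add: field_simps)
  show ?thesis
    unfolding T1 A B unfolding w(2) using d
    by (simp add: field_simps) (simp add: algebra_simps eval_nat_numeral)
qed

lemma has_real_derivative_divide_sqrt:
  assumes N: "(N has_real_derivative N') (at x)" and P: "(P has_real_derivative P') (at x)"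
    and pos: "P x > 0"
  shows "((\<lambda>y. N y / sqrt (P y)) has_real_derivative
    N' / sqrt (P x) - N x * P' / (2 * sqrt (P x) ^ 3)) (at x)"
proof -
  have "((\<lambda>y. sqrt (P y)) has_real_derivative P' / (2 * sqrt (P x))) (at x)"
    using DERIV_chain2[OF DERIV_real_sqrt[OF pos] P] by (simp add: field_simps)
  from DERIV_divide[OF N this] pos have
    "((\<lambda>y. N y / sqrt (P y)) has_real_derivative
      (N' * sqrt (P x) - N x * (P' / (2 * sqrt (P x)))) / (sqrt (P x) * sqrt (P x))) (at x)"
    by simp
  moreover have "(N' * sqrt (P x) - N x * (P' / (2 * sqrt (P x)))) / (sqrt (P x) * sqrt (P x))
      = N' / sqrt (P x) - N x * P' / (2 * sqrt (P x) ^ 3)"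
    using pos by (simp add: field_simps power3_eq_cube)
  ultimately show ?thesis by simp
qed

lemma rs_q_has_derivative_v:
  assumes d: "rs_delta s1 e e1 u \<noteq> 0"
  shows "((\<lambda>v'. rs_q s1 e e1 f g u v') has_real_derivative
    (g u * (rs_delta s1 e e1 u)\<^sup>2 - f u * v) / rs_w s1 e e1 u v ^ 3) (at v)"
proof -
  define d where "d = rs_delta s1 e e1 u"
  have "((\<lambda>v'. (f u + g u * v') / sqrt (d\<^sup>2 + v'\<^sup>2)) has_real_derivative
      g u / sqrt (d\<^sup>2 + v\<^sup>2) - (f u + g u * v) * (2 * v) / (2 * sqrt (d\<^sup>2 + v\<^sup>2) ^ 3)) (at v)"
    using d unfolding d_def
    by (intro has_real_derivative_divide_sqrt) (auto intro!: derivative_eq_intros simp: add_pos_nonneg)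
  moreover have "g u / w - (f u + g u * v) * (2 * v) / (2 * w ^ 3) = (g u * w\<^sup>2 - (f u + g u * v) * v) / w ^ 3"
    if "w > 0" for w :: real
    using that by (simp add: field_simps power2_eq_square power3_eq_cube)
  moreover have "(g u * (d\<^sup>2 + v\<^sup>2) - (f u + g u * v) * v) = g u * d\<^sup>2 - f u * v"
    by (simp add: algebra_simps power2_eq_square)
  ultimately show ?thesis using rs_w_pos_and_square[OF d, of v] unfolding rs_q_def[abs_def] rs_w_def d_def by simp
qed

lemma rs_q_has_derivative_u:
  assumes d: "rs_delta s1 e e1 u \<noteq> 0"
    and D: "(rs_delta s1 e e1 has_real_derivative D) (at u)"
    and f: "(f has_real_derivative F1) (at u)" and g: "(g has_real_derivative G1) (at u)"
  shows "((\<lambda>u'. rs_q s1 e e1 f g u' v) has_real_derivative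
    (F1 + G1 * v) / rs_w s1 e e1 u v
    - (f u + g u * v) * rs_delta s1 e e1 u * D / rs_w s1 e e1 u v ^ 3) (at u)"
proof -
  have "((\<lambda>u'. (rs_delta s1 e e1 u')\<^sup>2 + v\<^sup>2) has_real_derivative 2 * rs_delta s1 e e1 u * D) (at u)"
    using D by (auto intro!: derivative_eq_intros)
  moreover have "((\<lambda>u'. f u' + g u' * v) has_real_derivative F1 + G1 * v) (at u)"
    using f g by (auto intro!: derivative_eq_intros)
  ultimately show ?thesis
    using has_real_derivative_divide_sqrt d unfolding rs_q_def[abs_def] rs_w_def
    by (fastforce simp: add_pos_nonneg mult.assoc)
qed

lemma cross_tchebychev_asymptotic_tangent_eq_0_iff:
  assumes ruled: "standard_ruled s s1 s2 s3 e e1 e2 e3 I" and u: "u \<in> I"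
    and d: "rs_delta s1 e e1 u \<noteq> 0"
    and f: "(f has_real_derivative F1) (at u)" and g: "(g has_real_derivative G1) (at u)"
  shows "cross3 (rs_Tvec s1 s2 e e1 e2 f g u v) (rs_asym_tangent s1 s2 e e1 e2 u v) = 0 \<longleftrightarrow>
    g u * rs_kappa e e1 e2 u * v\<^sup>2 + 2 * rs_delta s1 e e1 u * G1 * v
    + (2 * rs_delta s1 e e1 u * F1 - deriv (rs_delta s1 e e1) u * f u
       + g u * rs_kappa e e1 e2 u * (rs_delta s1 e e1 u)\<^sup>2
       - g u * rs_delta s1 e e1 u * \<bar>rs_delta s1 e e1 u\<bar> * rs_lambda s1 e u) = 0"
    (is "_ \<longleftrightarrow> ?quadratic = 0")
proof -
  define w where "w = rs_w s1 e e1 u v"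
  define X where "X = s1 u + v *\<^sub>R e1 u"
  define m where "m = - rs_h11 s1 s2 e e1 e2 u v / (2 * rs_h12 s1 e e1 u v)"
  have D: "(rs_delta s1 e e1 has_real_derivative deriv (rs_delta s1 e e1) u) (at u)"
    using rs_delta_has_derivative[OF ruled u] by (simp add: DERIV_imp_deriv)
  note identity = tchebychev_asymptotic_identity[OF d rs_w_pos_and_square[OF d, of v, folded w_def],
      where f = "f u" and g = "g u" and Df = F1 and Dg = G1 and Dd = "deriv (rs_delta s1 e e1) u"
      and k = "rs_kappa e e1 e2 u" and a = "s1 u \<bullet> e u"]
  note evaluations = rs_h11_eq[OF ruled u d] rs_h12_eq[OF ruled u] rs_q_def[of s1 e e1 f g u v]
    DERIV_imp_deriv[OF rs_q_has_derivative_v[OF d]]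
    DERIV_imp_deriv[OF rs_q_has_derivative_u[OF d D f g]]
  have "rs_T1 s1 e e1 f g u v * m - rs_T2 s1 s2 e e1 e2 f g u v = - ?quadratic / (2 * (rs_delta s1 e e1 u)\<^sup>2)"
    using identity rs_lambda_eq[OF ruled u d] d
    unfolding m_def rs_T1_def rs_T2_def Let_def evaluations w_def[symmetric]
    by (simp add: mult.assoc)
  moreover have "cross3 (rs_Tvec s1 s2 e e1 e2 f g u v) (rs_asym_tangent s1 s2 e e1 e2 u v)
      = (rs_T1 s1 e e1 f g u v * m - rs_T2 s1 s2 e e1 e2 f g u v) *\<^sub>R cross3 X (e u)"
    unfolding rs_Tvec_def rs_asym_tangent_def X_def[symmetric] m_def
    by (rule cross3_tangent_combination)
  moreover have "cross3 X (e u) \<bullet> e1 u = rs_delta s1 e e1 u"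
    using cross_triple[of X "e u" "e1 u"] standard_ruled_frame(4)[OF ruled u]
    unfolding X_def rs_delta_def by (simp add: inner_add_right dot_cross_self inner_commute)
  ultimately show ?thesis using d by auto
qed

lemma quadratic_eq_0_on_open_iff:
  fixes A B C :: real
  assumes J: "open J" "J \<noteq> {}"
  shows "(\<forall>v\<in>J. A * v\<^sup>2 + B * v + C = 0) \<longleftrightarrow> A = 0 \<and> B = 0 \<and> C = 0"
proof safe
  assume P: "\<forall>v\<in>J. A * v\<^sup>2 + B * v + C = 0"
  obtain v r where "v \<in> J" "r > 0" "ball v r \<subseteq> J" using J open_contains_ball by blast
  then have "v - r / 2 \<in> J" "v \<in> J" "v + r / 2 \<in> J" by (auto simp: dist_real_def)
  note roots = this[THEN bspec[OF P]]
  have "A * r\<^sup>2 / 2 = (A * (v + r / 2)\<^sup>2 + B * (v + r / 2) + C) + (A * (v - r / 2)\<^sup>2 + B * (v - r / 2) + C)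
      - 2 * (A * v\<^sup>2 + B * v + C)"
    by (simp add: algebra_simps power2_eq_square)
  with roots \<open>r > 0\<close> show A: "A = 0" by simp
  have "B * r = (A * (v + r / 2)\<^sup>2 + B * (v + r / 2) + C) - (A * (v - r / 2)\<^sup>2 + B * (v - r / 2) + C)
      - 2 * A * v * r"
    by (simp add: algebra_simps power2_eq_square)
  with roots A \<open>r > 0\<close> show B: "B = 0" by simp
  show "C = 0" using roots(2) A B by simp
qed simp_all

lemma has_real_derivative_sqrt_abs:
  assumes D: "(d has_real_derivative D) (at u)" and d: "d u \<noteq> 0"
  shows "((\<lambda>x. sqrt \<bar>d x\<bar>) has_real_derivative D * sqrt \<bar>d u\<bar> / (2 * d u)) (at u)"
proof -
  have "((\<lambda>x. (d x)\<^sup>2) has_real_derivative 2 * d u * D) (at u)"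
    using D by (auto intro!: derivative_eq_intros)
  from DERIV_chain2[OF DERIV_real_sqrt this] d
  have "((\<lambda>x. \<bar>d x\<bar>) has_real_derivative d u * D / \<bar>d u\<bar>) (at u)"
    by (simp add: real_sqrt_abs field_simps)
  from DERIV_chain2[OF DERIV_real_sqrt this] d
  have "((\<lambda>x. sqrt \<bar>d x\<bar>) has_real_derivative
      inverse (sqrt \<bar>d u\<bar>) / 2 * (d u * D / \<bar>d u\<bar>)) (at u)"
    by simp
  moreover have "inverse (sqrt \<bar>d u\<bar>) / 2 * (d u * D / \<bar>d u\<bar>) = D * sqrt \<bar>d u\<bar> / (2 * d u)"
    using d by (simp add: field_simps abs_if real_sqrt_mult_self)
  ultimately show ?thesis by simp
qed

lemma sqrt_abs_substitution:
  assumes I: "open I" "u \<in> I" and D: "(d has_real_derivative D) (at u)" and d: "d u \<noteq> 0"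
    and h: "(h has_real_derivative H) (at u)" and f: "\<And>x. x \<in> I \<Longrightarrow> f x = sqrt \<bar>d x\<bar> * h x"
  shows "2 * d u * deriv f u - D * f u = 2 * d u * sqrt \<bar>d u\<bar> * H"
proof -
  have "D * f u / (2 * d u) + sqrt \<bar>d u\<bar> * H = D * sqrt \<bar>d u\<bar> * h u / (2 * d u) + sqrt \<bar>d u\<bar> * H"
    using f[OF I(2)] by simp
  moreover have "((\<lambda>x. sqrt \<bar>d x\<bar> * h x) has_real_derivative
      D * sqrt \<bar>d u\<bar> * h u / (2 * d u) + sqrt \<bar>d u\<bar> * H) (at u)"
    using DERIV_mult[OF has_real_derivative_sqrt_abs[OF D d] h] by (simp add: mult.commute)
  ultimately have "((\<lambda>x. sqrt \<bar>d x\<bar> * h x) has_real_derivative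
      D * f u / (2 * d u) + sqrt \<bar>d u\<bar> * H) (at u)"
    by (simp only:)
  then have "(f has_real_derivative D * f u / (2 * d u) + sqrt \<bar>d u\<bar> * H) (at u)"
    by (rule has_field_derivative_transform_within_open[OF _ I]) (simp add: f)
  then show ?thesis
    using d by (simp add: DERIV_imp_deriv field_simps)
qed

lemma sqrt_abs_ode_solutions:
  fixes d f l :: "real \<Rightarrow> real" and c :: real
  assumes I: "open I" and c: "c \<noteq> 0" and d: "\<And>u. u \<in> I \<Longrightarrow> d u \<noteq> 0"
    and D: "\<And>u. u \<in> I \<Longrightarrow> (d has_real_derivative deriv d u) (at u)"
    and f: "\<And>u. u \<in> I \<Longrightarrow> f differentiable (at u)"
  shows "(\<forall>u\<in>I. 2 * d u * deriv f u - deriv d u * f u = c * d u * \<bar>d u\<bar> * l u) \<longleftrightarrow>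
    (\<exists>F c2. (\<forall>u\<in>I. (F has_real_derivative sqrt \<bar>d u\<bar> * l u) (at u)) \<and>
            (\<forall>u\<in>I. f u = sqrt \<bar>d u\<bar> * (c / 2 * F u + c2)))"
proof
  assume ode: "\<forall>u\<in>I. 2 * d u * deriv f u - deriv d u * f u = c * d u * \<bar>d u\<bar> * l u"
  define F where "F x = 2 / c * (f x / sqrt \<bar>d x\<bar>)" for x
  have "(F has_real_derivative sqrt \<bar>d u\<bar> * l u) (at u)" if u: "u \<in> I" for u
  proof -
    obtain Df where "(f has_real_derivative Df) (at u)"
      using f[OF u] by (auto simp: real_differentiable_def)
    moreover have "sqrt \<bar>d u\<bar> \<noteq> 0" using d[OF u] by simp
    ultimately have quot: "((\<lambda>x. f x / sqrt \<bar>d x\<bar>) has_real_derivative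
        (Df * sqrt \<bar>d u\<bar> - f u * (deriv d u * sqrt \<bar>d u\<bar> / (2 * d u))) / (sqrt \<bar>d u\<bar> * sqrt \<bar>d u\<bar>)) (at u)"
      using DERIV_divide has_real_derivative_sqrt_abs[OF D[OF u] d[OF u]] by blast
    have "\<exists>H. (F has_real_derivative H) (at u)"
      unfolding F_def[abs_def] using DERIV_cmult[OF quot] by blast
    then obtain H where H: "(F has_real_derivative H) (at u)" ..
    have "\<And>x. x \<in> I \<Longrightarrow> f x = sqrt \<bar>d x\<bar> * (c / 2 * F x)"
      using c d by (simp add: F_def)
    from sqrt_abs_substitution[OF I u D[OF u] d[OF u] DERIV_cmult[OF H] this]
    have "2 * d u * deriv f u - deriv d u * f u = 2 * d u * sqrt \<bar>d u\<bar> * (c / 2 * H)" .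
    moreover have "c * d u * (sqrt \<bar>d u\<bar> * (sqrt \<bar>d u\<bar> * l u)) = c * d u * \<bar>d u\<bar> * l u"
      by (simp add: mult.assoc[symmetric])
    ultimately have "c * d u * (sqrt \<bar>d u\<bar> * (sqrt \<bar>d u\<bar> * l u)) = c * d u * (sqrt \<bar>d u\<bar> * H)"
      using ode u by (simp add: ac_simps)
    with c d[OF u] have "H = sqrt \<bar>d u\<bar> * l u" by simp
    with H show ?thesis by simp
  qed
  moreover have "\<forall>u\<in>I. f u = sqrt \<bar>d u\<bar> * (c / 2 * F u + 0)"
    using c d by (simp add: F_def)
  ultimately show "\<exists>F c2. (\<forall>u\<in>I. (F has_real_derivative sqrt \<bar>d u\<bar> * l u) (at u)) \<and>
      (\<forall>u\<in>I. f u = sqrt \<bar>d u\<bar> * (c / 2 * F u + c2))"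
    by blast
next
  assume "\<exists>F c2. (\<forall>u\<in>I. (F has_real_derivative sqrt \<bar>d u\<bar> * l u) (at u)) \<and>
      (\<forall>u\<in>I. f u = sqrt \<bar>d u\<bar> * (c / 2 * F u + c2))"
  then obtain F c2 where F: "\<forall>u\<in>I. (F has_real_derivative sqrt \<bar>d u\<bar> * l u) (at u)"
    and fF: "\<forall>u\<in>I. f u = sqrt \<bar>d u\<bar> * (c / 2 * F u + c2)" by blast
  show "\<forall>u\<in>I. 2 * d u * deriv f u - deriv d u * f u = c * d u * \<bar>d u\<bar> * l u"
  proof
    fix u assume u: "u \<in> I"
    have "((\<lambda>x. c / 2 * F x + c2) has_real_derivative c / 2 * (sqrt \<bar>d u\<bar> * l u)) (at u)"
      using F u by (auto intro!: derivative_eq_intros)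
    then have "2 * d u * deriv f u - deriv d u * f u
        = 2 * d u * sqrt \<bar>d u\<bar> * (c / 2 * (sqrt \<bar>d u\<bar> * l u))"
      by (rule sqrt_abs_substitution[OF I u D[OF u] d[OF u]]) (use fF in blast)
    then show "2 * d u * deriv f u - deriv d u * f u = c * d u * \<bar>d u\<bar> * l u"
      by (simp add: field_simps abs_if real_sqrt_mult_self)
  qed
qed

lemma constant_on_interval_iff_deriv_eq_0:
  fixes g :: "real \<Rightarrow> real"
  assumes I: "open I" "is_interval I" and g: "\<And>u. u \<in> I \<Longrightarrow> g differentiable (at u)"
  shows "(\<forall>u\<in>I. deriv g u = 0) \<longleftrightarrow> (\<exists>c. \<forall>u\<in>I. g u = c)"
proof
  assume "\<forall>u\<in>I. deriv g u = 0"
  then have "\<And>u. u \<in> I \<Longrightarrow> (g has_field_derivative 0) (at u within I)"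
    using g by (metis DERIV_deriv_iff_real_differentiable has_field_derivative_at_within)
  then show "\<exists>c. \<forall>u\<in>I. g u = c"
    using has_field_derivative_zero_constant[OF is_interval_convex[OF I(2)]] by blast
next
  assume "\<exists>c. \<forall>u\<in>I. g u = c"
  then obtain c where c: "\<forall>u\<in>I. g u = c" ..
  show "\<forall>u\<in>I. deriv g u = 0"
  proof
    fix u assume "u \<in> I"
    have "(g has_real_derivative 0) (at u)"
      by (rule has_field_derivative_transform_within_open[OF DERIV_const I(1) \<open>u \<in> I\<close>])
         (simp add: c)
    then show "deriv g u = 0" by (rule DERIV_imp_deriv)
  qed
qed

lemma tcheb_tangential_curved_asym_iff:
  assumes ruled: "standard_ruled s s1 s2 s3 e e1 e2 e3 I"
    and skew: "\<forall>u\<in>I. rs_delta s1 e e1 u \<noteq> 0"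
    and J: "open J" "J \<noteq> {}"
    and fg: "\<forall>u\<in>I. f differentiable (at u) \<and> g differentiable (at u)"
  shows "tcheb_tangential_curved_asym s1 s2 e e1 e2 f g I J \<longleftrightarrow>
    (\<forall>u\<in>I. g u * rs_kappa e e1 e2 u = 0 \<and> deriv g u = 0 \<and>
      2 * rs_delta s1 e e1 u * deriv f u - deriv (rs_delta s1 e e1) u * f u
        = g u * rs_delta s1 e e1 u * \<bar>rs_delta s1 e e1 u\<bar> * rs_lambda s1 e u)"
proof -
  have "(\<forall>v\<in>J. cross3 (rs_Tvec s1 s2 e e1 e2 f g u v) (rs_asym_tangent s1 s2 e e1 e2 u v) = 0)
      \<longleftrightarrow> g u * rs_kappa e e1 e2 u = 0 \<and> deriv g u = 0 \<and>
      2 * rs_delta s1 e e1 u * deriv f u - deriv (rs_delta s1 e e1) u * f u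
        = g u * rs_delta s1 e e1 u * \<bar>rs_delta s1 e e1 u\<bar> * rs_lambda s1 e u"
    if u: "u \<in> I" for u
  proof -
    have d: "rs_delta s1 e e1 u \<noteq> 0" using skew u by blast
    have fD: "(f has_real_derivative deriv f u) (at u)" and gD: "(g has_real_derivative deriv g u) (at u)"
      using fg u by (simp_all add: DERIV_deriv_iff_real_differentiable)
    have "(\<forall>v\<in>J. cross3 (rs_Tvec s1 s2 e e1 e2 f g u v) (rs_asym_tangent s1 s2 e e1 e2 u v) = 0)
      \<longleftrightarrow> (\<forall>v\<in>J. g u * rs_kappa e e1 e2 u * v\<^sup>2 + 2 * rs_delta s1 e e1 u * deriv g u * v
        + (2 * rs_delta s1 e e1 u * deriv f u - deriv (rs_delta s1 e e1) u * f u
           + g u * rs_kappa e e1 e2 u * (rs_delta s1 e e1 u)\<^sup>2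
           - g u * rs_delta s1 e e1 u * \<bar>rs_delta s1 e e1 u\<bar> * rs_lambda s1 e u) = 0)"
      by (simp only: cross_tchebychev_asymptotic_tangent_eq_0_iff[OF ruled u d fD gD])
    also have "\<dots> \<longleftrightarrow> g u * rs_kappa e e1 e2 u = 0 \<and> 2 * rs_delta s1 e e1 u * deriv g u = 0
        \<and> 2 * rs_delta s1 e e1 u * deriv f u - deriv (rs_delta s1 e e1) u * f u
           + g u * rs_kappa e e1 e2 u * (rs_delta s1 e e1 u)\<^sup>2
           - g u * rs_delta s1 e e1 u * \<bar>rs_delta s1 e e1 u\<bar> * rs_lambda s1 e u = 0"
      by (rule quadratic_eq_0_on_open_iff[OF J])
    finally show ?thesis using d by (auto simp: algebra_simps)
  qed
  then show ?thesis unfolding tcheb_tangential_curved_asym_def by blast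
qed

theorem proposition6:
  fixes s s1 s2 s3 e e1 e2 e3 :: "real \<Rightarrow> real^3"
    and f g :: "real \<Rightarrow> real"
    and I J :: "real set"
  assumes ruled: "standard_ruled s s1 s2 s3 e e1 e2 e3 I"
    and skew: "\<forall>u\<in>I. rs_delta s1 e e1 u \<noteq> 0"
    and J: "open J" "J \<noteq> {}"
    and fg_diff: "\<forall>u\<in>I. f differentiable (at u) \<and> g differentiable (at u)"
    and q_nz: "\<forall>u\<in>I. \<forall>v\<in>J. f u + g u * v \<noteq> 0"
    and f_nz: "\<exists>u\<in>I. f u \<noteq> 0"
    and g_nz: "\<exists>u\<in>I. g u \<noteq> 0"
  shows "tcheb_tangential_curved_asym s1 s2 e e1 e2 f g I J \<longleftrightarrow>
    ((\<forall>u\<in>I. rs_kappa e e1 e2 u = 0) \<and>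
     (\<exists>c1. c1 \<noteq> 0 \<and> (\<forall>u\<in>I. g u = c1) \<and>
        (\<exists>F c2. (\<forall>u\<in>I. (F has_real_derivative
                      (sqrt \<bar>rs_delta s1 e e1 u\<bar> * rs_lambda s1 e u)) (at u)) \<and>
                (\<forall>u\<in>I. f u = sqrt \<bar>rs_delta s1 e e1 u\<bar> * (c1 / 2 * F u + c2)))))"
proof -
  have I: "open I" "is_interval I" using ruled by (simp_all add: standard_ruled_def)
  have \<delta>': "\<And>u. u \<in> I \<Longrightarrow> (rs_delta s1 e e1 has_real_derivative deriv (rs_delta s1 e e1) u) (at u)"
    by (metis rs_delta_has_derivative[OF ruled] DERIV_imp_deriv)
  have \<delta>: "\<And>u. u \<in> I \<Longrightarrow> rs_delta s1 e e1 u \<noteq> 0" and f: "\<And>u. u \<in> I \<Longrightarrow> f differentiable (at u)"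
    using skew fg_diff by simp_all
  note ode = sqrt_abs_ode_solutions[OF I(1) _ \<delta> \<delta>' f, where l = "rs_lambda s1 e"]
  note g_const = constant_on_interval_iff_deriv_eq_0[OF I, of g]
  show ?thesis unfolding tcheb_tangential_curved_asym_iff[OF ruled skew J fg_diff]
  proof (rule iffI, goal_cases)
    case 1
    then obtain c1 where g: "\<forall>u\<in>I. g u = c1" using g_const fg_diff by auto
    moreover have "c1 \<noteq> 0" using g g_nz by auto
    ultimately show ?case using 1 ode[of c1] by auto
  next
    case 2
    then obtain c1 where "c1 \<noteq> 0" "\<forall>u\<in>I. g u = c1" by blast
    then show ?case using 2 g_const fg_diff ode[of c1] by auto
  qed
qed

end
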